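(* Let $a<b$ and let $f:[a,b]\to\mathbb{R}$ be continuous. Define $$I_f(a,b)=\frac{1}{b-a}\int_a^b f(t)\,\mathrm{d}t,\quad B_f(a,b)=\frac{b-a}{2}\,I_f(a,b),\quad J_f(a,b)=b\,I_f(a,b)-\frac{1}{b-a}\int_a^b t\,f(t)\,\mathrm{d}t.$$ If $B_f(a,b)=J_f(a,b)$, then there exists $\eta\in(a,b)$ such that $f(\eta)=I_f(a,\eta)$, where $I_f(a,\eta)=\frac{1}{\eta-a}\int_a^\eta f(t)\,\mathrm{d}t$. *)

theory Defs
  imports "HOL-Analysis.Analysis"
begin

definition I_mean :: "(real \<Rightarrow> real) \<Rightarrow> real \<Rightarrow> real \<Rightarrow> real" where
  "I_mean f a b = (1 / (b - a)) * integral {a..b} f"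

definition B_mean :: "(real \<Rightarrow> real) \<Rightarrow> real \<Rightarrow> real \<Rightarrow> real" where
  "B_mean f a b = ((b - a) / 2) * I_mean f a b"

definition J_mean :: "(real \<Rightarrow> real) \<Rightarrow> real \<Rightarrow> real \<Rightarrow> real" where
  "J_mean f a b = b * I_mean f a b - (1 / (b - a)) * integral {a..b} (\<lambda>t. t * f t)"

end

theory Submission
  imports Defs
begin

text \<open>
  With \<open>F x = \<integral>\<^sub>a\<^sup>x f\<close> and \<open>G x = \<integral>\<^sub>a\<^sup>x t f(t) dt\<close>, the hypothesis
  \<open>B = J\<close> says that \<open>G b = (a + b)/2 \<cdot> F b\<close>. Hence the function
  \<open>\<phi> x = (x + a)/2 \<cdot> F x - G x\<close> vanishes at both \<open>a\<close> and \<open>b\<close>, and Rolle's theorem gives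
  \<open>\<eta> \<in> (a, b)\<close> with \<open>0 = \<phi>' \<eta> = (F \<eta> - (\<eta> - a) f \<eta>)/2\<close>, i.e. \<open>f \<eta> = I\<^sub>f(a, \<eta>)\<close>.
\<close>

definition moment_gap :: "(real \<Rightarrow> real) \<Rightarrow> real \<Rightarrow> real \<Rightarrow> real" where
  "moment_gap f a x = (x + a) / 2 * integral {a..x} f - integral {a..x} (\<lambda>t. t * f t)"

lemma B_mean_eq_J_mean_iff:
  assumes "a < b"
  shows "B_mean f a b = J_mean f a b \<longleftrightarrow>
    integral {a..b} (\<lambda>t. t * f t) = (a + b) / 2 * integral {a..b} f"
proof -
  have "b - a \<noteq> 0"
    using assms by simp
  have "(b - a) / 2 * (1 / (b - a) * F) = b * (1 / (b - a) * F) - 1 / (b - a) * G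
      \<longleftrightarrow> F / 2 = (b * F - G) / (b - a)" for F G
  proof -
    have "(b - a) / 2 * (1 / (b - a) * F) = F / 2"
      using \<open>b - a \<noteq> 0\<close> by (simp add: field_simps)
    moreover have "b * (1 / (b - a) * F) - 1 / (b - a) * G = (b * F - G) / (b - a)"
      by (simp add: diff_divide_distrib)
    ultimately show ?thesis
      by (simp only:)
  qed
  also have "\<dots> F G \<longleftrightarrow> F / 2 * (b - a) = b * F - G" for F G
    using \<open>b - a \<noteq> 0\<close> by (simp add: eq_divide_eq)
  also have "\<dots> F G \<longleftrightarrow> G = (a + b) / 2 * F" for F G
    by (auto simp: field_simps)
  finally show ?thesis
    unfolding B_mean_def J_mean_def I_mean_def .
qed

lemma eq_I_mean_iff:
  assumes "a < x"
  shows "f x = I_mean f a x \<longleftrightarrow> integral {a..x} f = (x - a) * f x"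
  using assms unfolding I_mean_def by (auto simp: field_simps)

lemma has_field_derivative_integral_upper:
  fixes f :: "real \<Rightarrow> real"
  assumes "continuous_on {a..b} f" and "x \<in> {a..b}"
  shows "((\<lambda>x. integral {a..x} f) has_field_derivative f x) (at x within {a..b})"
  using integral_has_vector_derivative[OF assms]
  by (simp add: has_real_derivative_iff_has_vector_derivative)

lemma moment_gap_left [simp]: "moment_gap f a a = 0"
  by (simp add: moment_gap_def)

lemma moment_gap_right_eq_0:
  assumes "a < b" and "B_mean f a b = J_mean f a b"
  shows "moment_gap f a b = 0"
  using assms by (simp add: B_mean_eq_J_mean_iff moment_gap_def algebra_simps)

lemma has_field_derivative_moment_gap:
  assumes "continuous_on {a..b} f" and "x \<in> {a..b}"
  shows "(moment_gap f a has_field_derivative (integral {a..x} f - (x - a) * f x) / 2)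
           (at x within {a..b})"
proof -
  have "continuous_on {a..b} (\<lambda>t. t * f t)"
    by (intro continuous_intros assms(1))
  then have dG: "((\<lambda>x. integral {a..x} (\<lambda>t. t * f t)) has_field_derivative x * f x)
      (at x within {a..b})"
    using assms(2) by (rule has_field_derivative_integral_upper)
  have dF: "((\<lambda>x. integral {a..x} f) has_field_derivative f x) (at x within {a..b})"
    using assms by (rule has_field_derivative_integral_upper)
  have "((\<lambda>x. (x + a) / 2) has_field_derivative 1 / 2) (at x within {a..b})"
    by (auto intro!: derivative_eq_intros)
  from DERIV_diff[OF DERIV_mult[OF this dF] dG]
  have "(moment_gap f a has_field_derivative
      1 / 2 * integral {a..x} f + (x + a) / 2 * f x - x * f x) (at x within {a..b})"
    unfolding moment_gap_def[abs_def] by (simp add: algebra_simps)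
  then show ?thesis
    by (simp add: field_simps)
qed

lemma Rolle_field_derivative:
  fixes f f' :: "real \<Rightarrow> real"
  assumes "a < b" and "f a = f b"
    and deriv: "\<And>x. x \<in> {a..b} \<Longrightarrow> (f has_field_derivative f' x) (at x within {a..b})"
  shows "\<exists>z. a < z \<and> z < b \<and> f' z = 0"
proof -
  have "\<exists>z. a < z \<and> z < b \<and> (\<lambda>v. f' z * v) = (\<lambda>v. 0)"
  proof (rule Rolle_deriv[OF assms(1,2)])
    show "continuous_on {a..b} f"
      using deriv by (rule DERIV_continuous_on)
    fix x assume "a < x" "x < b"
    with deriv[of x] show "(f has_derivative (\<lambda>v. f' x * v)) (at x)"
      by (simp add: at_within_Icc_at has_field_derivative_def)
  qed
  then show ?thesis
    by (metis mult.right_neutral)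
qed

theorem mainTheorem7:
  fixes f :: "real \<Rightarrow> real" and a b :: real
  assumes "a < b"
    and "continuous_on {a..b} f"
    and "B_mean f a b = J_mean f a b"
  shows "\<exists>\<eta>. a < \<eta> \<and> \<eta> < b \<and> f \<eta> = I_mean f a \<eta>"
proof -
  have "moment_gap f a a = moment_gap f a b"
    using moment_gap_right_eq_0[OF assms(1,3)] by simp
  from Rolle_field_derivative[OF assms(1) this has_field_derivative_moment_gap[OF assms(2)]]
  obtain \<eta> where "a < \<eta>" "\<eta> < b" "(integral {a..\<eta>} f - (\<eta> - a) * f \<eta>) / 2 = 0"
    by blast
  then show ?thesis
    by (auto simp: eq_I_mean_iff)
qed

end
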